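(* Let $G=A(n,\theta)$ with $n\ge3$ odd, and let $x\in G$ have order $4$. Then $x^2\notin[x,G]$; consequently the image of $x$ in $G/[x,G]$ has order $4$.
   Context: Let $n=2m+1$ be odd, $\mathbb{F}_{2^n}$ the field with $2^n$ elements, $\theta$ a generator of $\mathrm{Gal}(\mathbb{F}_{2^n}/\mathbb{F}_2)$, $a^\theta$ the image of $a$ under $\theta$. $G=A(n,\theta)$ is the group of matrices $\begin{bmatrix}1&a&b\\0&1&a^\theta\\0&0&1\end{bmatrix}$, $a,b\in\mathbb{F}_{2^n}$, denoted $(a,b)$, with $(a,b)(c,d)=(a+c,\,b+d+ac^\theta)$. For $x\in G$, $[x,G]$ denotes the subgroup generated by all commutators $x^{-1}g^{-1}xg$, $g\in G$. *)

theory Defs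
  imports "HOL-Algebra.Algebra"
begin

text \<open>Field automorphisms of a field (for a finite field of characteristic 2 these are
exactly the elements of the Galois group over the prime field).\<close>
definition field_aut :: "('a::field \<Rightarrow> 'a) \<Rightarrow> bool" where
  "field_aut \<sigma> \<longleftrightarrow> bij \<sigma> \<and> (\<forall>x y. \<sigma> (x + y) = \<sigma> x + \<sigma> y) \<and> (\<forall>x y. \<sigma> (x * y) = \<sigma> x * \<sigma> y)"

definition A_grp :: "('a::field \<Rightarrow> 'a) \<Rightarrow> ('a \<times> 'a) monoid" where
  "A_grp \<theta> = \<lparr>carrier = UNIV,
     monoid.mult = (\<lambda>(a, b) (c, d). (a + c, b + d + a * \<theta> c)),
     monoid.one = (0, 0)\<rparr>"

definition comm_sub :: "('g, 'b) monoid_scheme \<Rightarrow> 'g \<Rightarrow> 'g set" where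
  "comm_sub G x = generate G
     {inv\<^bsub>G\<^esub> x \<otimes>\<^bsub>G\<^esub> inv\<^bsub>G\<^esub> g \<otimes>\<^bsub>G\<^esub> x \<otimes>\<^bsub>G\<^esub> g | g. g \<in> carrier G}"

end

theory Submission
  imports Defs "HOL-Number_Theory.Residues"
begin

(* Write x = (a,b). In characteristic 2 we have x^2 = (0, a \<theta>(a)), while every commutator
   [x,(c,d)] equals (0, a \<theta>(c) - c \<theta>(a)); these values form a central subgroup containing
   [x,G]. So x^2 \<in> [x,G] would give a c with a \<theta>(a) = a \<theta>(c) + c \<theta>(a), i.e. \<theta>(s) = s + 1
   for s = c/a (a \<noteq> 0 because x has order 4). Such an s is moved by every power of \<theta>
   between s and s + 1, in particular by the Frobenius map, so s^2 \<in> {s, s + 1}. Now s^2 = s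
   forces s \<in> {0, 1}, which \<theta> fixes, and s^2 = s + 1 gives s^(2^n) = s + 1 \<noteq> s for odd n. *)

lemma field_aut_add: "field_aut f \<Longrightarrow> f (x + y) = f x + f y"
  by (simp add: field_aut_def)

lemma field_aut_mult: "field_aut f \<Longrightarrow> f (x * y) = f x * f y"
  by (simp add: field_aut_def)

lemma field_aut_zero: "field_aut f \<Longrightarrow> f 0 = 0"
  using field_aut_add[of f 0 0] add_left_imp_eq[of "f 0" "f 0" 0] by simp

lemma field_aut_uminus: "field_aut f \<Longrightarrow> f (- x) = - f x"
  using field_aut_add[of f x "- x"] field_aut_zero[of f] minus_unique[of "f x" "f (- x)"]
  by simp

lemma field_aut_eq_0_iff: "field_aut f \<Longrightarrow> f x = 0 \<longleftrightarrow> x = 0"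
  using field_aut_zero[of f] bij_is_inj[of f] by (metis field_aut_def injD)

lemma field_aut_one: "field_aut f \<Longrightarrow> f 1 = 1"
  using field_aut_mult[of f 1 1] field_aut_eq_0_iff[of f 1] by simp

lemma field_aut_divide: "field_aut f \<Longrightarrow> f (x / y) = f x / f y"
  using field_aut_mult[of f "x / y" y] field_aut_eq_0_iff[of f y] field_aut_zero[of f]
  by (cases "y = 0") (simp_all add: field_simps)

lemma char_two_if_card_power_of_two:
  assumes "card (UNIV :: 'a::{field,finite} set) = 2 ^ n"
  shows "(2::'a) = 0"
proof -
  have "of_nat (card (UNIV :: 'a set)) = (0::'a)"
    by (simp add: of_nat_eq_0_iff_char_dvd CHAR_dvd_CARD)
  then show ?thesis
    using assms by simp
qed

lemma add_self_char_two: "(2::'a::ring_1) = 0 \<Longrightarrow> x + x = (0::'a)"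
  by (metis mult_2 mult_zero_left)

lemma power2_add_char_two: "(2::'a::comm_ring_1) = 0 \<Longrightarrow> (x + y) ^ 2 = x ^ 2 + (y::'a) ^ 2"
  by (simp add: power2_sum mult.assoc)

(* The library's finite_field_power_card_eq_same is stated for the sort finite_field. *)
lemma power_card_UNIV_eq_self:
  fixes y :: "'a::{field,finite}"
  shows "y ^ card (UNIV :: 'a set) = y"
proof (cases "y = 0")
  case True
  then show ?thesis
    by (simp add: finite_UNIV_card_ge_0)
next
  case False
  define S where "S = UNIV - {0::'a}"
  have "(\<Prod>z\<in>S. z) = (\<Prod>z\<in>S. y * z)"
    unfolding S_def
    by (rule prod.reindex_bij_witness[of _ "\<lambda>z. y * z" "\<lambda>z. z / y"]) (use False in auto)
  also have "\<dots> = y ^ card S * (\<Prod>z\<in>S. z)"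
    by (simp add: prod.distrib)
  finally have "y ^ card S * (\<Prod>z\<in>S. z) = 1 * (\<Prod>z\<in>S. z)"
    by simp
  moreover have "(\<Prod>z\<in>S. z) \<noteq> 0"
    unfolding S_def by simp
  ultimately have "y ^ card S = 1"
    by simp
  moreover have "card (UNIV :: 'a set) = Suc (card S)"
    unfolding S_def using card_Suc_Diff1[of "UNIV :: 'a set" 0] by simp
  ultimately show ?thesis
    by simp
qed

lemma field_aut_square:
  assumes "(2::'a::{field,finite}) = 0"
  shows "field_aut (\<lambda>x::'a. x ^ 2)"
proof -
  have "inj (\<lambda>x::'a. x ^ 2)"
  proof (rule injI)
    fix x y :: 'a
    assume "x ^ 2 = y ^ 2"
    then have "(x + y) ^ 2 = 0"
      using assms by (simp add: power2_add_char_two add_self_char_two)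
    then have "x + y = y + y"
      using add_self_char_two[OF assms, of y] by simp
    then show "x = y"
      by simp
  qed
  then have "bij (\<lambda>x::'a. x ^ 2)"
    by (simp add: bij_def finite_UNIV_inj_surj)
  then show ?thesis
    unfolding field_aut_def using assms by (simp add: power2_add_char_two power_mult_distrib)
qed

lemma field_aut_funpow_add_one:
  fixes \<theta> :: "'a::field \<Rightarrow> 'a"
  assumes "(2::'a) = 0" and "field_aut \<theta>" and "\<theta> s = s + 1"
  shows "(\<theta> ^^ j) s = s \<or> (\<theta> ^^ j) s = s + 1"
proof (induction j)
  case (Suc j)
  have "\<theta> (s + 1) = s"
    using assms by (simp add: field_aut_add field_aut_one add.assoc add_self_char_two)
  with Suc assms(3) show ?case
    by auto
qed simp

lemma power_two_power_if_square_eq_add_one: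
  fixes s :: "'a::field"
  assumes "(2::'a) = 0" and "s ^ 2 = s + 1"
  shows "s ^ (2 ^ m) = (if even m then s else s + 1)"
proof (induction m)
  case (Suc m)
  have "(s + 1) ^ 2 = s"
    using assms power2_add_char_two[OF assms(1), of s 1] by (simp add: add.assoc add_self_char_two)
  moreover have "s ^ (2 ^ Suc m) = (s ^ (2 ^ m)) ^ 2"
    by (simp only: power_Suc2 power_mult)
  ultimately show ?case
    using Suc assms(2) by auto
qed simp

lemma field_aut_generator_ne_add_one:
  fixes \<theta> :: "'a::{field,finite} \<Rightarrow> 'a"
  assumes card: "card (UNIV :: 'a set) = 2 ^ n" and "odd n"
    and aut: "field_aut \<theta>"
    and gen: "\<forall>\<sigma>. field_aut \<sigma> \<longrightarrow> (\<exists>j. \<sigma> = \<theta> ^^ j)"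
  shows "\<theta> s \<noteq> s + 1"
proof
  assume \<theta>s: "\<theta> s = s + 1"
  have two: "(2::'a) = 0"
    using card by (rule char_two_if_card_power_of_two)
  obtain j where frobenius: "(\<lambda>x::'a. x ^ 2) = \<theta> ^^ j"
    using gen field_aut_square[OF two] by blast
  have "s ^ 2 = s \<or> s ^ 2 = s + 1"
    using field_aut_funpow_add_one[OF two aut \<theta>s, of j] fun_cong[OF frobenius, of s] by simp
  then show False
  proof
    assume "s ^ 2 = s"
    then have "s = 0 \<or> s = 1"
      by (metis power2_eq_square mult_cancel_left2)
    then show False
      using \<theta>s two by (auto simp: field_aut_zero[OF aut] field_aut_one[OF aut])
  next
    assume "s ^ 2 = s + 1"
    then have "s ^ (2 ^ n) = s + 1"
      using power_two_power_if_square_eq_add_one[OF two, of s n] \<open>odd n\<close> by simp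
    then show False
      using power_card_UNIV_eq_self[of s] card by simp
  qed
qed

lemma eq_prime_power_if_dvd_not_dvd:
  fixes p d :: nat
  assumes "Factorial_Ring.prime p" and "d dvd p ^ Suc k" and "\<not> d dvd p ^ k"
  shows "d = p ^ Suc k"
proof -
  obtain i where "i \<le> Suc k" and d: "d = p ^ i"
    using divides_primepow_nat[OF assms(1), of d "Suc k"] assms(2) by blast
  moreover have "\<not> i \<le> k"
    using assms(3) unfolding d by (auto dest: le_imp_power_dvd)
  ultimately show ?thesis
    by (simp add: le_Suc_eq)
qed

lemma central_subgroup_is_normal:
  fixes G (structure)
  assumes "group G" and "subgroup H G"
    and "\<And>h g. h \<in> H \<Longrightarrow> g \<in> carrier G \<Longrightarrow> g \<otimes> h = h \<otimes> g"
  shows "H \<lhd> G"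
proof -
  interpret group G
    by (rule assms(1))
  show ?thesis
  proof (rule normal_inv_iff[THEN iffD2], intro conjI ballI)
    show "subgroup H G"
      by (rule assms(2))
    fix g h
    assume g: "g \<in> carrier G" and h: "h \<in> H"
    have "g \<otimes> h \<otimes> inv g = h \<otimes> g \<otimes> inv g"
      by (simp only: assms(3)[OF h g])
    also have "\<dots> = h"
      using g subgroup.mem_carrier[OF assms(2) h] by (simp add: m_assoc)
    finally show "g \<otimes> h \<otimes> inv g \<in> H"
      using h by simp
  qed
qed

lemma (in normal) FactGroup_ord_dvd_iff:
  assumes "x \<in> carrier G"
  shows "group.ord (G Mod H) (H #> x) dvd k \<longleftrightarrow> x [^] k \<in> H"
proof -
  interpret Q: group "G Mod H"
    by (rule factorgroup_is_group)
  have "H #> x \<in> carrier (G Mod H)"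
    using assms by (auto simp: carrier_FactGroup)
  then have "Q.ord (H #> x) dvd k \<longleftrightarrow> H #> (x [^] k) = H"
    using Q.pow_eq_id[of "H #> x" k] FactGroup_pow[OF assms, of k] by simp
  also have "\<dots> \<longleftrightarrow> x [^] k \<in> H"
    using coset_join1[OF _ _ is_subgroup] coset_join2[OF _ is_subgroup] nat_pow_closed[OF assms, of k]
    by (intro iffI) simp_all
  finally show ?thesis .
qed

lemma A_grp_mult [simp]: "(a, b) \<otimes>\<^bsub>A_grp \<theta>\<^esub> (c, d) = (a + c, b + d + a * \<theta> c)"
  by (simp add: A_grp_def)

lemma A_grp_one [simp]: "\<one>\<^bsub>A_grp \<theta>\<^esub> = (0, 0)"
  by (simp add: A_grp_def)

lemma A_grp_carrier [simp]: "carrier (A_grp \<theta>) = UNIV"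
  by (simp add: A_grp_def)

lemma A_grp_is_group:
  assumes "field_aut \<theta>"
  shows "group (A_grp \<theta>)"
proof (rule groupI)
  fix x y z :: "'a \<times> 'a"
  show "x \<otimes>\<^bsub>A_grp \<theta>\<^esub> y \<otimes>\<^bsub>A_grp \<theta>\<^esub> z = x \<otimes>\<^bsub>A_grp \<theta>\<^esub> (y \<otimes>\<^bsub>A_grp \<theta>\<^esub> z)"
    by (cases x; cases y; cases z) (simp add: field_aut_add[OF assms] algebra_simps)
next
  fix x :: "'a \<times> 'a"
  show "\<one>\<^bsub>A_grp \<theta>\<^esub> \<otimes>\<^bsub>A_grp \<theta>\<^esub> x = x"
    by (cases x) simp
  obtain a b where "x = (a, b)"
    by (cases x)
  then have "(- a, a * \<theta> a - b) \<otimes>\<^bsub>A_grp \<theta>\<^esub> x = \<one>\<^bsub>A_grp \<theta>\<^esub>"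
    by simp
  then show "\<exists>y\<in>carrier (A_grp \<theta>). y \<otimes>\<^bsub>A_grp \<theta>\<^esub> x = \<one>\<^bsub>A_grp \<theta>\<^esub>"
    by auto
qed auto

lemma A_grp_inv:
  assumes "field_aut \<theta>"
  shows "inv\<^bsub>A_grp \<theta>\<^esub> (a, b) = (- a, a * \<theta> a - b)"
  by (rule group.inv_equality[OF A_grp_is_group[OF assms]]) auto

lemma A_grp_square:
  assumes "(2::'a::field) = 0"
  shows "(a, b) [^]\<^bsub>A_grp \<theta>\<^esub> (2::nat) = (0, a * \<theta> (a::'a))"
  using assms by (simp add: numeral_2_eq_2 add_self_char_two)

lemma A_grp_commutator:
  assumes "field_aut \<theta>"
  shows "inv\<^bsub>A_grp \<theta>\<^esub> (a, b) \<otimes>\<^bsub>A_grp \<theta>\<^esub> inv\<^bsub>A_grp \<theta>\<^esub> (c, d)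
           \<otimes>\<^bsub>A_grp \<theta>\<^esub> (a, b) \<otimes>\<^bsub>A_grp \<theta>\<^esub> (c, d) = (0, a * \<theta> c - c * \<theta> a)"
  using assms
  by (simp add: A_grp_inv field_aut_add field_aut_uminus algebra_simps)

lemma A_grp_central:
  assumes "field_aut \<theta>"
  shows "g \<otimes>\<^bsub>A_grp \<theta>\<^esub> (0, e) = (0, e) \<otimes>\<^bsub>A_grp \<theta>\<^esub> g"
  using assms by (cases g) (simp add: field_aut_zero)

lemma subgroup_A_grp_commutator_values:
  fixes \<theta> :: "'a::field \<Rightarrow> 'a"
  assumes aut: "field_aut \<theta>"
  shows "subgroup (range (\<lambda>c. (0, a * \<theta> c - c * \<theta> a))) (A_grp \<theta>)"
proof (rule group.subgroupI[OF A_grp_is_group[OF aut]])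
  fix h :: "'a \<times> 'a"
  assume "h \<in> range (\<lambda>c. (0, a * \<theta> c - c * \<theta> a))"
  then obtain c where h: "h = (0, a * \<theta> c - c * \<theta> a)"
    by blast
  have "inv\<^bsub>A_grp \<theta>\<^esub> h = (0, a * \<theta> (- c) - (- c) * \<theta> a)"
    unfolding h A_grp_inv[OF aut] by (simp add: field_aut_zero[OF aut] field_aut_uminus[OF aut])
  then show "inv\<^bsub>A_grp \<theta>\<^esub> h \<in> range (\<lambda>c. (0, a * \<theta> c - c * \<theta> a))"
    by blast
next
  fix h k :: "'a \<times> 'a"
  assume "h \<in> range (\<lambda>c. (0, a * \<theta> c - c * \<theta> a))" "k \<in> range (\<lambda>c. (0, a * \<theta> c - c * \<theta> a))"
  then obtain c e where "h = (0, a * \<theta> c - c * \<theta> a)" "k = (0, a * \<theta> e - e * \<theta> a)"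
    by blast
  then have "h \<otimes>\<^bsub>A_grp \<theta>\<^esub> k = (0, a * \<theta> (c + e) - (c + e) * \<theta> a)"
    by (simp add: field_aut_add[OF aut] algebra_simps)
  then show "h \<otimes>\<^bsub>A_grp \<theta>\<^esub> k \<in> range (\<lambda>c. (0, a * \<theta> c - c * \<theta> a))"
    by blast
qed auto

lemma comm_sub_A_grp_subset:
  assumes aut: "field_aut \<theta>"
  shows "comm_sub (A_grp \<theta>) (a, b) \<subseteq> range (\<lambda>c. (0, a * \<theta> c - c * \<theta> a))"
  unfolding comm_sub_def
proof (rule group.generate_subgroup_incl[OF A_grp_is_group[OF aut] _
      subgroup_A_grp_commutator_values[OF aut]])
  show "{inv\<^bsub>A_grp \<theta>\<^esub> (a, b) \<otimes>\<^bsub>A_grp \<theta>\<^esub> inv\<^bsub>A_grp \<theta>\<^esub> g \<otimes>\<^bsub>A_grp \<theta>\<^esub> (a, b) \<otimes>\<^bsub>A_grp \<theta>\<^esub> g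
          | g. g \<in> carrier (A_grp \<theta>)} \<subseteq> range (\<lambda>c. (0, a * \<theta> c - c * \<theta> a))"
    using A_grp_commutator[OF aut, of a b] by fastforce
qed

lemma comm_sub_A_grp_normal:
  assumes aut: "field_aut \<theta>"
  shows "comm_sub (A_grp \<theta>) x \<lhd> A_grp \<theta>"
proof (rule central_subgroup_is_normal[OF A_grp_is_group[OF aut]])
  show "subgroup (comm_sub (A_grp \<theta>) x) (A_grp \<theta>)"
    unfolding comm_sub_def by (simp add: group.generate_is_subgroup[OF A_grp_is_group[OF aut]])
  fix h g
  assume "h \<in> comm_sub (A_grp \<theta>) x"
  then obtain e where "h = (0, e)"
    using comm_sub_A_grp_subset[OF aut, of "fst x" "snd x"] by auto
  then show "g \<otimes>\<^bsub>A_grp \<theta>\<^esub> h = h \<otimes>\<^bsub>A_grp \<theta>\<^esub> g"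
    by (simp add: A_grp_central[OF aut])
qed

lemma A_grp_square_notin_comm_sub:
  assumes two: "(2::'a::field) = 0" and aut: "field_aut \<theta>"
    and no_AS: "\<And>s. \<theta> s \<noteq> s + 1" and "a \<noteq> 0"
  shows "(0, a * \<theta> a) \<notin> comm_sub (A_grp \<theta>) (a, b)"
proof
  assume "(0, a * \<theta> a) \<in> comm_sub (A_grp \<theta>) (a, b)"
  then obtain c where c: "a * \<theta> a = a * \<theta> c - c * \<theta> a"
    using comm_sub_A_grp_subset[OF aut] by blast
  have "\<theta> a \<noteq> 0"
    using \<open>a \<noteq> 0\<close> field_aut_eq_0_iff[OF aut] by simp
  with c \<open>a \<noteq> 0\<close> two have "\<theta> (c / a) = c / a + 1"
    by (simp add: field_aut_divide[OF aut] field_simps)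
  with no_AS show False
    by blast
qed

theorem mainTheorem11:
  fixes \<theta> :: "'a::{field,finite} \<Rightarrow> 'a" and n :: nat and x :: "'a \<times> 'a"
  assumes "card (UNIV :: 'a set) = 2 ^ n" and "odd n" and "n \<ge> 3"
    and "field_aut \<theta>"
    and "\<forall>\<sigma>. field_aut \<sigma> \<longrightarrow> (\<exists>j. \<sigma> = \<theta> ^^ j)"
    and "group.ord (A_grp \<theta>) x = 4"
  shows "x [^]\<^bsub>A_grp \<theta>\<^esub> (2::nat) \<notin> comm_sub (A_grp \<theta>) x
       \<and> group.ord (A_grp \<theta> Mod comm_sub (A_grp \<theta>) x) (comm_sub (A_grp \<theta>) x #>\<^bsub>A_grp \<theta>\<^esub> x) = 4"
proof -
  note aut = assms(4) and ord_x = assms(6)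
  interpret G: group "A_grp \<theta>"
    using aut by (rule A_grp_is_group)
  interpret N: normal "comm_sub (A_grp \<theta>) x" "A_grp \<theta>"
    using aut by (rule comm_sub_A_grp_normal)
  have two: "(2::'a) = 0"
    using assms(1) by (rule char_two_if_card_power_of_two)
  obtain a b where x: "x = (a, b)"
    by (cases x)
  have "a \<noteq> 0"
    using G.pow_eq_id[of x 2] ord_x A_grp_square[OF two] x field_aut_zero[OF aut] by auto
  then have x2: "x [^]\<^bsub>A_grp \<theta>\<^esub> (2::nat) \<notin> comm_sub (A_grp \<theta>) x"
    using A_grp_square_notin_comm_sub[OF two aut field_aut_generator_ne_add_one[OF assms(1,2,4,5)]]
      A_grp_square[OF two] x by simp
  let ?d = "group.ord (A_grp \<theta> Mod comm_sub (A_grp \<theta>) x) (comm_sub (A_grp \<theta>) x #>\<^bsub>A_grp \<theta>\<^esub> x)"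
  have "x [^]\<^bsub>A_grp \<theta>\<^esub> (4::nat) = \<one>\<^bsub>A_grp \<theta>\<^esub>"
    using G.pow_eq_id[of x 4] ord_x by simp
  then have "?d dvd 4"
    using N.FactGroup_ord_dvd_iff[of x 4] N.one_closed by simp
  moreover have "\<not> ?d dvd 2"
    using N.FactGroup_ord_dvd_iff[of x 2] x2 by simp
  ultimately have "?d = 2 ^ Suc 1"
    by (intro eq_prime_power_if_dvd_not_dvd) simp_all
  with x2 show ?thesis
    by simp
qed

end
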